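(* Let $g$ be a nondegenerate symmetric bilinear form on $\mathbb{R}^n$, $A$ a $g$-symmetric endomorphism of $\mathbb{R}^n$, $T>0$, and let $\Phi(t)=\exp(tX)$ with $X=\begin{pmatrix}0&g^{-1}\\ gA&0\end{pmatrix}$ acting on $\mathbb{R}^n\oplus(\mathbb{R}^n)^*$. Assume $\mathrm{Ker}(A)=\{0\}$. Then the set of instants $t\in\left]0,T\right]$ at which the graph $\mathrm{Gr}(\Phi(t))$ is not transversal to the diagonal $\Delta$ is finite and is equal to \[\mathcal C=\Big\{t\in\left]0,T\right]: -\frac{4k^2\pi^2}{t^2}\in\mathfrak s(A)\text{ for some }k\in\mathbb{N}\setminus\{0\}\Big\}.\] On the other hand, if $0\in\mathfrak s(A)$, this set of instants coincides with the whole interval $[0,T]$.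
   Context: $g$ is viewed as the isomorphism $v\mapsto g(\cdot,v)$ from $\mathbb{R}^n$ to $(\mathbb{R}^n)^*$; $\mathfrak s(A)$ is the complex spectrum of $A$. $\mathrm{Gr}(\Phi)=\{(x,\Phi x)\}$ is a subspace of $(\mathbb{R}^n\oplus(\mathbb{R}^n)^* )\oplus(\mathbb{R}^n\oplus(\mathbb{R}^n)^* )$, and $\Delta=\{(x,x)\}$ is the diagonal; $\mathrm{Gr}(\Phi(t))$ is transversal to $\Delta$ iff $1$ is not an eigenvalue of $\Phi(t)$. *)

theory Defs
  imports "HOL-Analysis.Analysis"
begin

primrec matpow :: "real^'m^'m \<Rightarrow> nat \<Rightarrow> real^'m^'m" where
  "matpow M 0 = mat 1"
| "matpow M (Suc k) = M ** matpow M k"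

definition mat_exp :: "real^'m^'m \<Rightarrow> real^'m^'m" where
  "mat_exp M = (\<Sum>k. (1 / fact k) *\<^sub>R matpow M k)"

definition bform :: "real^'n^'n \<Rightarrow> real^'n \<Rightarrow> real^'n \<Rightarrow> real" where
  "bform G v w = v \<bullet> (G *v w)"

definition g_symmetric :: "real^'n^'n \<Rightarrow> real^'n^'n \<Rightarrow> bool" where
  "g_symmetric G A \<longleftrightarrow> (\<forall>v w. bform G (A *v v) w = bform G v (A *v w))"

definition cspec :: "real^'n^'n \<Rightarrow> complex set" where
  "cspec A = {\<mu>. \<exists>v :: complex^'n. v \<noteq> 0 \<and> (map_matrix complex_of_real A) *v v = \<mu> *s v}"

text \<open>The endomorphism X of R^n (+) (R^n)^*: coordinates Inl i for R^n, Inr i for the dual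
basis of (R^n)^*. g viewed as the map v \<mapsto> g(.,v) has matrix G, so
X = [[0, G^{-1}], [G A, 0]].\<close>
definition Xmat :: "real^'n^'n \<Rightarrow> real^'n^'n \<Rightarrow> real^('n+'n)^('n+'n)" where
  "Xmat G A = (\<chi> i j. case (i, j) of
       (Inl a, Inr b) \<Rightarrow> matrix_inv G $ a $ b
     | (Inr a, Inl b) \<Rightarrow> (G ** A) $ a $ b
     | _ \<Rightarrow> 0)"

definition Phi :: "real^'n^'n \<Rightarrow> real^'n^'n \<Rightarrow> real \<Rightarrow> real^('n+'n)^('n+'n)" where
  "Phi G A t = mat_exp (t *\<^sub>R Xmat G A)"

definition graph :: "real^'m^'m \<Rightarrow> ((real^'m) \<times> (real^'m)) set" where
  "graph M = {(x, M *v x) | x. True}"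

definition diagonal :: "((real^'m) \<times> (real^'m)) set" where
  "diagonal = {(x, x) | x. True}"

definition transversal :: "('a::real_vector) set \<Rightarrow> 'a set \<Rightarrow> bool" where
  "transversal U V \<longleftrightarrow> {u + v | u v. u \<in> U \<and> v \<in> V} = UNIV"

end

(*
  Gr(Phi t) fails to be transversal to the diagonal exactly when 1 is an eigenvalue of
  Phi t = exp (t X). By the spectral mapping theorem spec (exp M) = exp (spec M) this happens
  iff t X has an eigenvalue r with exp r = 1, i.e. X has an eigenvalue 2 pi i n / t. In block
  form, X (a, b) = r (a, b) iff b = r G a and A a = r^2 a, so the eigenvalues of X are the square
  roots of those of A, and the condition becomes -4 n^2 pi^2 / t^2 in spec A. If A is injective
  then n = 0 is excluded, and finiteness of spec A leaves finitely many such t in ]0, T];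
  if 0 is in spec A then r = 0 works for every t.

  The hard half of the spectral mapping theorem, spec (exp M) within exp (spec M), holds because
  M commutes with exp M and therefore has an eigenvector inside each eigenspace of exp M.
*)

theory Submission
  imports Defs "HOL-Computational_Algebra.Fundamental_Theorem_Algebra"
begin

section \<open>The matrix exponential\<close>

lemma matpow_commute:
  assumes "P ** M = M ** P"
  shows "P ** matpow M k = matpow M k ** P"
proof (induction k)
  case (Suc k)
  then show ?case by (metis assms matpow.simps(2) matrix_mul_assoc)
qed simp

lemma matpow_entry_bound:
  fixes M :: "real^'m^'m"
  assumes "\<And>i j. \<bar>M$i$j\<bar> \<le> c"
  shows "\<bar>matpow M k $ i $ j\<bar> \<le> (real CARD('m) * c)^k"
proof (induction k arbitrary: i j)
  case 0
  then show ?case by (simp add: mat_def)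
next
  case (Suc k)
  have "0 \<le> c" using assms[of i i] by linarith
  have "\<bar>matpow M (Suc k) $ i $ j\<bar> \<le> (\<Sum>l\<in>UNIV. \<bar>M$i$l\<bar> * \<bar>matpow M k $ l $ j\<bar>)"
    by (simp add: matrix_matrix_mult_def sum_abs flip: abs_mult)
  also have "\<dots> \<le> (\<Sum>l\<in>(UNIV::'m set). c * (real CARD('m) * c)^k)"
    by (intro sum_mono mult_mono) (use assms Suc \<open>0 \<le> c\<close> in auto)
  also have "\<dots> = (real CARD('m) * c)^Suc k" by simp
  finally show ?case .
qed

lemma norm_matrix_le_sum_abs: "norm (M :: real^'n^'m) \<le> (\<Sum>i\<in>UNIV. \<Sum>j\<in>UNIV. \<bar>M$i$j\<bar>)"
proof -
  have "norm M \<le> (\<Sum>i\<in>UNIV. norm (M$i))"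
    unfolding norm_vec_def by (rule L2_set_le_sum) simp
  also have "\<dots> \<le> (\<Sum>i\<in>UNIV. \<Sum>j\<in>UNIV. \<bar>M$i$j\<bar>)"
    by (intro sum_mono norm_le_l1_cart)
  finally show ?thesis .
qed

lemma summable_mat_exp: "summable (\<lambda>k. (1 / fact k) *\<^sub>R matpow (M::real^'m^'m) k)"
proof -
  define N where "N = real CARD('m)"
  have "\<bar>M$i$j\<bar> \<le> norm M" for i j
    using component_le_norm_cart[of "M$i" j] Finite_Cartesian_Product.norm_nth_le[of M i] by linarith
  then have "norm (matpow M k) \<le> (\<Sum>i\<in>(UNIV::'m set). \<Sum>j\<in>(UNIV::'m set). (N * norm M)^k)" for k
    using norm_matrix_le_sum_abs[of "matpow M k"] matpow_entry_bound[of M "norm M" k]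
    unfolding N_def by (meson order_trans sum_mono)
  then have "norm (matpow M k) \<le> N * N * (N * norm M)^k" for k
    by (simp add: N_def mult.assoc)
  then have "norm ((1 / fact k) *\<^sub>R matpow M k) \<le> N * N * (inverse (fact k) * (N * norm M)^k)" for k
    by (simp add: field_simps)
  then show ?thesis
    by (intro summable_comparison_test[OF _ summable_mult[OF summable_exp]]) auto
qed

lemma linear_matrix_mult_left: "linear (\<lambda>P::real^'n^'m. P ** M)"
  by (rule linearI)
    (simp_all add: vec_eq_iff matrix_matrix_mult_def sum.distrib distrib_right
      sum_distrib_left mult.assoc)

lemma linear_matrix_mult_right: "linear (\<lambda>P::real^'n^'m. M ** P)"
  by (rule linearI) (simp_all add: matrix_add_ldistrib matrix_scalar_ac scalar_matrix_assoc)

lemma mat_exp_commute: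
  assumes "P ** M = M ** (P::real^'m^'m)"
  shows "P ** mat_exp M = mat_exp M ** P"
proof -
  have "P ** mat_exp M = (\<Sum>k. P ** ((1 / fact k) *\<^sub>R matpow M k))"
    unfolding mat_exp_def
    by (rule bounded_linear.suminf[OF linear_matrix_mult_right[unfolded linear_conv_bounded_linear] summable_mat_exp])
  also have "\<dots> = (\<Sum>k. ((1 / fact k) *\<^sub>R matpow M k) ** P)"
    by (simp add: matrix_scalar_ac scalar_matrix_assoc[symmetric] matpow_commute[OF assms])
  also have "\<dots> = mat_exp M ** P"
    unfolding mat_exp_def
    by (rule bounded_linear.suminf[OF linear_matrix_mult_left[unfolded linear_conv_bounded_linear] summable_mat_exp, symmetric])
  finally show ?thesis .
qed

section \<open>Complexification and eigenvectors\<close>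

abbreviation cmatrix :: "real^'n^'m \<Rightarrow> complex^'n^'m" where
  "cmatrix \<equiv> map_matrix complex_of_real"

lemma cmatrix_mult: "cmatrix (M ** N) = cmatrix M ** cmatrix N"
  by (simp add: vec_eq_iff matrix_matrix_mult_def)

lemma cmatrix_mat: "cmatrix (mat 1) = mat 1"
  by (simp add: vec_eq_iff mat_def)

lemma cmatrix_matpow_mult: "cmatrix (matpow M k) *v w = ((*v) (cmatrix M) ^^ k) w"
  by (induction k) (simp_all add: cmatrix_mat cmatrix_mult matrix_vector_mul_assoc[symmetric])

lemma funpow_eigenvector:
  fixes C :: "'a::field^'m^'m"
  assumes "C *v w = l *s w"
  shows "((*v) C ^^ k) w = l^k *s w"
  by (induction k) (simp_all add: assms vector_scalar_commute vector_smult_assoc mult.commute)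

lemma cmatrix_scaleR_mult: "cmatrix (c *\<^sub>R M) *v w = complex_of_real c *s (cmatrix M *v w)"
  by (simp add: vec_eq_iff matrix_vector_mult_def sum_distrib_left mult.assoc)

lemma scaleR_complex_vec: "c *\<^sub>R (v::complex^'m) = complex_of_real c *s v"
  by (simp add: vec_eq_iff flip: scaleR_conv_of_real)

lemma linear_cmatrix_mult: "linear (\<lambda>M::real^'n^'m. cmatrix M *v w)"
proof (rule linearI)
  show "cmatrix (M + N) *v w = cmatrix M *v w + cmatrix N *v w" for M N
    by (simp add: vec_eq_iff matrix_vector_mult_def sum.distrib distrib_right)
  show "cmatrix (c *\<^sub>R M) *v w = c *\<^sub>R (cmatrix M *v w)" for c M
    by (simp add: cmatrix_scaleR_mult scaleR_complex_vec)
qed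

lemma cmatrix_suminf_mult:
  fixes f :: "nat \<Rightarrow> real^'n^'m"
  shows "summable f \<Longrightarrow> cmatrix (suminf f) *v w = (\<Sum>k. cmatrix (f k) *v w)"
  using bounded_linear.suminf linear_cmatrix_mult linear_conv_bounded_linear by blast

lemma mat_exp_eigenvector:
  assumes "cmatrix M *v w = l *s w"
  shows "cmatrix (mat_exp M) *v w = exp l *s w"
proof -
  have "bounded_linear (\<lambda>c::complex. c *s w)"
    unfolding linear_conv_bounded_linear[symmetric]
    by (rule linearI)
      (simp_all only: vector_sadd_rdistrib scaleR_complex_vec vector_smult_assoc scaleR_conv_of_real)
  then have "(\<Sum>k. (l^k /\<^sub>R fact k) *s w) = exp l *s w"
    unfolding exp_def by (rule bounded_linear.suminf[OF _ summable_exp_generic, symmetric])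
  moreover have "cmatrix (mat_exp M) *v w = (\<Sum>k. (l^k /\<^sub>R fact k) *s w)"
    unfolding mat_exp_def cmatrix_suminf_mult[OF summable_mat_exp] cmatrix_scaleR_mult
      cmatrix_matpow_mult funpow_eigenvector[OF assms] vector_smult_assoc
    by (simp add: scaleR_conv_of_real field_simps)
  ultimately show ?thesis by simp
qed

section \<open>Common eigenvectors of commuting matrices\<close>

definition poly_apply :: "complex poly \<Rightarrow> complex^'m^'m \<Rightarrow> complex^'m \<Rightarrow> complex^'m" where
  "poly_apply p C u = (\<Sum>i\<le>degree p. coeff p i *s ((*v) C ^^ i) u)"

lemma poly_apply_upto:
  assumes "degree p \<le> n"
  shows "poly_apply p C u = (\<Sum>i\<le>n. coeff p i *s ((*v) C ^^ i) u)"
  unfolding poly_apply_def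
  by (rule sum.mono_neutral_left) (use assms in \<open>auto simp: coeff_eq_0\<close>)

lemma poly_apply_add: "poly_apply (p + q) C u = poly_apply p C u + poly_apply q C u"
proof -
  define n where "n = max (degree p) (degree q)"
  have "degree (p + q) \<le> n" "degree p \<le> n" "degree q \<le> n"
    unfolding n_def using degree_add_le_max[of p q] by auto
  then show ?thesis
    by (simp add: poly_apply_upto[of _ n] vector_sadd_rdistrib sum.distrib)
qed

lemma poly_apply_smult: "poly_apply (smult c p) C u = c *s poly_apply p C u"
  using poly_apply_upto[of "smult c p" "degree p"]
  by (simp add: poly_apply_def vec.scale_sum_right vector_smult_assoc)

lemma poly_apply_pCons_0: "poly_apply (pCons 0 q) C u = C *v poly_apply q C u"
proof -
  have "poly_apply (pCons 0 q) C u = (\<Sum>i\<le>Suc (degree q). coeff (pCons 0 q) i *s ((*v) C ^^ i) u)"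
    by (rule poly_apply_upto) (simp add: degree_pCons_le)
  also have "\<dots> = C *v poly_apply q C u"
    by (subst sum.atMost_Suc_shift) (simp add: poly_apply_def vec.sum vector_scalar_commute)
  finally show ?thesis .
qed

lemma poly_apply_linear_factor:
  "poly_apply ([:-r, 1:] * q) C u = C *v poly_apply q C u - r *s poly_apply q C u"
proof -
  have "[:-r, 1:] * q = pCons 0 q + smult (-r) q" by simp
  then show ?thesis
    by (simp only: poly_apply_add poly_apply_smult poly_apply_pCons_0 vector_smult_lneg diff_conv_add_uminus)
qed

lemma poly_apply_const: "poly_apply [:c:] C u = c *s u"
  by (simp add: poly_apply_def)

lemma poly_apply_eigenvector:
  assumes "C *v v = \<mu> *s v"
  shows "poly_apply p C v = poly p \<mu> *s v"
  by (simp add: poly_apply_def funpow_eigenvector[OF assms] poly_altdef vec_eq_iff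
      sum_distrib_right mult.assoc)

lemma poly_apply_commuting_eigenspace:
  assumes "Q ** C = C ** Q" and "Q *v u = \<mu> *s u"
  shows "Q *v poly_apply p C u = \<mu> *s poly_apply p C u"
proof -
  have "Q *v (C *v x) = C *v (Q *v x)" for x
    by (metis assms(1) matrix_vector_mul_assoc)
  then have "Q *v ((*v) C ^^ i) u = \<mu> *s ((*v) C ^^ i) u" for i
    by (induction i) (simp_all add: assms(2) vector_scalar_commute)
  then show ?thesis
    by (simp add: poly_apply_def vec.sum vec.scale_sum_right vector_scalar_commute vector_smult_assoc mult.commute)
qed

lemma nontrivial_linear_relation:
  fixes f :: "nat \<Rightarrow> 'a::euclidean_space"
  obtains c where "\<exists>k\<le>DIM('a). c k \<noteq> 0" and "(\<Sum>k\<le>DIM('a). c k *\<^sub>R f k) = 0"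
proof (cases "inj_on f {..DIM('a)}")
  case True
  then have "card (f ` {..DIM('a)}) = Suc DIM('a)"
    by (simp add: card_image)
  then have "dependent (f ` {..DIM('a)})"
    using independent_bound by fastforce
  then obtain a where "(\<Sum>v\<in>f ` {..DIM('a)}. a v *\<^sub>R v) = 0" and "\<exists>v\<in>f ` {..DIM('a)}. a v \<noteq> 0"
    using eucl.independent_explicit[of "f ` {..DIM('a)}"] by blast
  then show ?thesis
    using that[of "a \<circ> f"] by (auto simp: sum.reindex[OF True])
next
  case False
  then obtain i j where ij: "i \<le> DIM('a)" "j \<le> DIM('a)" "i \<noteq> j" "f i = f j"
    unfolding inj_on_def by auto
  define c :: "nat \<Rightarrow> real" where "c k = (if k = i then 1 else if k = j then -1 else 0)" for k
  have "\<exists>k\<le>DIM('a). c k \<noteq> 0"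
    using ij(1) by (auto simp: c_def intro!: exI[of _ i])
  moreover have "(\<Sum>k\<le>DIM('a). c k *\<^sub>R f k) = (\<Sum>k\<in>{i, j}. c k *\<^sub>R f k)"
    by (rule sum.mono_neutral_right) (use ij in \<open>auto simp: c_def\<close>)
  moreover have "\<dots> = 0"
    using ij by (simp add: c_def)
  ultimately show ?thesis
    by (intro that) simp_all
qed

lemma poly_of_real_relation:
  fixes c :: "nat \<Rightarrow> real"
  assumes "\<exists>k\<le>D. c k \<noteq> 0"
  obtains p where "p \<noteq> 0"
    and "\<And>C u. poly_apply p C u = (\<Sum>k\<le>D. c k *\<^sub>R ((*v) C ^^ k) u)"
proof -
  define p where "p = (\<Sum>k\<le>D. monom (complex_of_real (c k)) k)"
  have coeff: "coeff p i = (if i \<le> D then complex_of_real (c i) else 0)" for i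
    unfolding p_def coeff_sum coeff_monom by (simp add: sum.delta)
  then have "degree p \<le> D"
    by (intro degree_le) simp
  show ?thesis
  proof (rule that[of p])
    show "p \<noteq> 0"
      using assms coeff by (metis coeff_0 of_real_eq_0_iff)
    show "poly_apply p C u = (\<Sum>k\<le>D. c k *\<^sub>R ((*v) C ^^ k) u)" for C u
      by (simp add: poly_apply_upto[OF \<open>degree p \<le> D\<close>] coeff scaleR_complex_vec)
  qed
qed

text \<open>Peel off linear factors x - r of p until the remaining factor q has q(C) u \<noteq> 0; then
  q(C) u is an eigenvector of C for r, lying in the \<mu>-eigenspace of Q because Q commutes with C.\<close>

lemma eigenvector_from_annihilating_poly:
  fixes C Q :: "complex^'m^'m"
  assumes "Q ** C = C ** Q" and "Q *v u = \<mu> *s u" and "u \<noteq> 0"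
  shows "p \<noteq> 0 \<Longrightarrow> poly_apply p C u = 0 \<Longrightarrow> \<exists>r w. w \<noteq> 0 \<and> C *v w = r *s w \<and> Q *v w = \<mu> *s w"
proof (induction "degree p" arbitrary: p rule: less_induct)
  case less
  show ?case
  proof (cases "degree p = 0")
    case True
    then obtain c where "p = [:c:]"
      by (metis degree_eq_zeroE)
    with less.prems assms(3) show ?thesis
      by (simp add: poly_apply_const)
  next
    case False
    then obtain r where "poly p r = 0"
      by (metis fundamental_theorem_of_algebra constant_degree)
    then obtain q where pq: "p = [:-r, 1:] * q"
      by (metis dvdE poly_eq_0_iff_dvd)
    with less.prems have "q \<noteq> 0" by auto
    then have "degree p = degree [:-r, 1:] + degree q"
      unfolding pq by (intro degree_mult_eq) auto
    then have "degree q < degree p" by simp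
    show ?thesis
    proof (cases "poly_apply q C u = 0")
      case True
      then show ?thesis
        using less.hyps \<open>degree q < degree p\<close> \<open>q \<noteq> 0\<close> by blast
    next
      case False
      have "C *v poly_apply q C u = r *s poly_apply q C u"
        using less.prems(2) unfolding pq poly_apply_linear_factor by simp
      with False show ?thesis
        using poly_apply_commuting_eigenspace[OF assms(1,2)] by blast
    qed
  qed
qed

lemma commuting_matrices_common_eigenvector:
  fixes C Q :: "complex^'m^'m"
  assumes "Q ** C = C ** Q" and "Q *v u = \<mu> *s u" and "u \<noteq> 0"
  obtains r w where "w \<noteq> 0" and "C *v w = r *s w" and "Q *v w = \<mu> *s w"
proof -
  obtain c where c: "\<exists>k\<le>DIM(complex^'m). c k \<noteq> 0"
    and rel: "(\<Sum>k\<le>DIM(complex^'m). c k *\<^sub>R ((*v) C ^^ k) u) = 0"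
    by (rule nontrivial_linear_relation)
  obtain p where "p \<noteq> 0"
    and p: "\<And>(C::complex^'m^'m) u. poly_apply p C u = (\<Sum>k\<le>DIM(complex^'m). c k *\<^sub>R ((*v) C ^^ k) u)"
    using poly_of_real_relation[OF c] by blast
  moreover have "poly_apply p C u = 0"
    unfolding p by (rule rel)
  ultimately show ?thesis
    using eigenvector_from_annihilating_poly[OF assms] that by blast
qed

lemma cspec_mat_exp: "cspec (mat_exp M) = exp ` cspec M"
proof
  show "exp ` cspec M \<subseteq> cspec (mat_exp M)"
    unfolding cspec_def using mat_exp_eigenvector by blast
  show "cspec (mat_exp M) \<subseteq> exp ` cspec M"
  proof
    fix \<mu> assume "\<mu> \<in> cspec (mat_exp M)"
    then obtain u where "u \<noteq> 0" and u: "cmatrix (mat_exp M) *v u = \<mu> *s u"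
      unfolding cspec_def by blast
    have "cmatrix (mat_exp M) ** cmatrix M = cmatrix M ** cmatrix (mat_exp M)"
      by (simp add: mat_exp_commute flip: cmatrix_mult)
    then obtain r w where w: "w \<noteq> 0" "cmatrix M *v w = r *s w"
      and "cmatrix (mat_exp M) *v w = \<mu> *s w"
      using commuting_matrices_common_eigenvector u \<open>u \<noteq> 0\<close> by blast
    then have "\<mu> = exp r"
      using mat_exp_eigenvector[OF w(2)] by simp
    with w show "\<mu> \<in> exp ` cspec M"
      unfolding cspec_def by blast
  qed
qed

lemma finite_cspec: "finite (cspec (A::real^'n^'n))"
proof -
  obtain c where c: "\<exists>k\<le>DIM(real^'n^'n). c k \<noteq> 0"
    and rel: "(\<Sum>k\<le>DIM(real^'n^'n). c k *\<^sub>R matpow A k) = 0"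
    by (rule nontrivial_linear_relation[of "matpow A"])
  obtain p where "p \<noteq> 0"
    and p: "\<And>(C::complex^'n^'n) u. poly_apply p C u = (\<Sum>k\<le>DIM(real^'n^'n). c k *\<^sub>R ((*v) C ^^ k) u)"
    using poly_of_real_relation[OF c] by blast
  have "cspec A \<subseteq> {z. poly p z = 0}"
  proof
    fix \<mu> assume "\<mu> \<in> cspec A"
    then obtain v where v: "v \<noteq> 0" "cmatrix A *v v = \<mu> *s v"
      unfolding cspec_def by blast
    have "poly p \<mu> *s v = poly_apply p (cmatrix A) v"
      by (simp add: poly_apply_eigenvector[OF v(2)])
    also have "\<dots> = cmatrix (\<Sum>k\<le>DIM(real^'n^'n). c k *\<^sub>R matpow A k) *v v"
      by (simp add: p real_vector.linear_sum[OF linear_cmatrix_mult] cmatrix_scaleR_mult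
          cmatrix_matpow_mult scaleR_complex_vec)
    also have "\<dots> = 0"
      unfolding rel by (simp add: vec_eq_iff matrix_vector_mult_def)
    finally show "\<mu> \<in> {z. poly p z = 0}"
      using v(1) by simp
  qed
  then show ?thesis
    using poly_roots_finite[OF \<open>p \<noteq> 0\<close>] finite_subset by blast
qed

section \<open>Transversality and the spectrum of \<open>Phi\<close>\<close>

lemma of_real_in_cspec_iff:
  "complex_of_real c \<in> cspec M \<longleftrightarrow> (\<exists>x. x \<noteq> 0 \<and> M *v x = c *\<^sub>R x)"
proof
  assume "complex_of_real c \<in> cspec M"
  then obtain w where "w \<noteq> 0" and w: "cmatrix M *v w = complex_of_real c *s w"
    unfolding cspec_def by blast
  define re im where "re = (\<chi> i. Re (w$i))" and "im = (\<chi> i. Im (w$i))"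
  have "M *v re = c *\<^sub>R re" and "M *v im = c *\<^sub>R im"
    using arg_cong[OF w, of "\<lambda>v. \<chi> i. Re (v$i)"] arg_cong[OF w, of "\<lambda>v. \<chi> i. Im (v$i)"]
    by (simp_all add: re_def im_def matrix_vector_mult_def vec_eq_iff Re_sum Im_sum mult.commute)
  moreover have "re \<noteq> 0 \<or> im \<noteq> 0"
    using \<open>w \<noteq> 0\<close> by (auto simp: re_def im_def vec_eq_iff complex_eq_iff)
  ultimately show "\<exists>x. x \<noteq> 0 \<and> M *v x = c *\<^sub>R x"
    by blast
next
  assume "\<exists>x. x \<noteq> 0 \<and> M *v x = c *\<^sub>R x"
  then obtain x where "x \<noteq> 0" and x: "M *v x = c *\<^sub>R x"
    by blast
  define w where "w = (\<chi> i. complex_of_real (x$i))"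
  have "(cmatrix M *v w) $ i = complex_of_real ((M *v x) $ i)" for i
    by (simp add: w_def matrix_vector_mult_def)
  then have "cmatrix M *v w = complex_of_real c *s w"
    by (simp add: x vec_eq_iff w_def)
  moreover have "w \<noteq> 0"
    using \<open>x \<noteq> 0\<close> by (simp add: w_def vec_eq_iff)
  ultimately show "complex_of_real c \<in> cspec M"
    unfolding cspec_def by blast
qed

lemma graph_plus_diagonal:
  "{u + v |u v. u \<in> graph M \<and> v \<in> diagonal} = {(a, b). b - a \<in> range (\<lambda>y. M *v y - y)}"
proof (intro set_eqI iffI)
  fix p assume "p \<in> {u + v |u v. u \<in> graph M \<and> v \<in> diagonal}"
  then obtain y z where "p = (y + z, M *v y + z)"
    unfolding graph_def diagonal_def by auto
  then show "p \<in> {(a, b). b - a \<in> range (\<lambda>y. M *v y - y)}"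
    by simp
next
  fix p assume "p \<in> {(a, b). b - a \<in> range (\<lambda>y. M *v y - y)}"
  then obtain a b y where "p = (a, b)" and "b - a = M *v y - y"
    by auto
  then have "p = (y, M *v y) + (a - y, a - y)"
    by (simp add: algebra_simps)
  then show "p \<in> {u + v |u v. u \<in> graph M \<and> v \<in> diagonal}"
    unfolding graph_def diagonal_def by blast
qed

lemma transversal_graph_diagonal_iff:
  "transversal (graph M) diagonal \<longleftrightarrow> 1 \<notin> cspec M"
proof -
  define L where "L y = M *v y - y" for y
  have "linear L"
    unfolding L_def[abs_def] by (intro linear_compose_sub matrix_vector_mul_linear linear_ident)
  have "transversal (graph M) diagonal \<longleftrightarrow> (\<forall>a b. b - a \<in> range L)"
    unfolding transversal_def graph_plus_diagonal L_def[abs_def] by (simp add: set_eq_iff)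
  also have "\<dots> \<longleftrightarrow> surj L"
    by (metis UNIV_I UNIV_eq_I diff_zero)
  also have "\<dots> \<longleftrightarrow> inj L"
    using linear_surjective_imp_injective linear_injective_imp_surjective \<open>linear L\<close> by blast
  also have "\<dots> \<longleftrightarrow> \<not> (\<exists>x. x \<noteq> 0 \<and> M *v x = 1 *\<^sub>R x)"
    unfolding linear_injective_0[OF \<open>linear L\<close>] L_def by auto
  also have "\<dots> \<longleftrightarrow> 1 \<notin> cspec M"
    using of_real_in_cspec_iff[of 1 M] by simp
  finally show ?thesis .
qed

lemma sum_UNIV_sum:
  "sum g (UNIV::('a::finite + 'b::finite) set) = (\<Sum>i\<in>UNIV. g (Inl i)) + (\<Sum>i\<in>UNIV. g (Inr i))"
  using sum.Plus[of "UNIV::'a set" "UNIV::'b set" g] by (simp add: comp_def)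

lemma cmatrix_Xmat_eigenvector_iff:
  fixes w :: "complex^('n::finite+'n)"
  shows "cmatrix (Xmat G A) *v w = r *s w \<longleftrightarrow>
     cmatrix (matrix_inv G) *v (\<chi> k. w $ Inr k) = r *s (\<chi> k. w $ Inl k) \<and>
     cmatrix (G ** A) *v (\<chi> k. w $ Inl k) = r *s (\<chi> k. w $ Inr k)"
  unfolding vec_eq_iff split_sum_all[of "\<lambda>i. (cmatrix (Xmat G A) *v w) $ i = (r *s w) $ i"]
  by (simp add: matrix_vector_mult_def sum_UNIV_sum Xmat_def)

lemma cmatrix_matrix_inv:
  assumes "invertible G"
  shows "cmatrix G ** cmatrix (matrix_inv G) = mat 1" and "cmatrix (matrix_inv G) ** cmatrix G = mat 1"
  using someI_ex[OF assms[unfolded invertible_def]]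
  by (simp_all add: matrix_inv_def cmatrix_mat flip: cmatrix_mult)

lemma cspec_XmatD:
  fixes G A :: "real^'n^'n"
  assumes "invertible G" and "r \<in> cspec (Xmat G A)"
  shows "r^2 \<in> cspec A"
proof -
  from assms(2) obtain w where "w \<noteq> 0" and "cmatrix (Xmat G A) *v w = r *s w"
    unfolding cspec_def by blast
  moreover define a b where "a = (\<chi> k. w $ Inl k)" and "b = (\<chi> k. w $ Inr k)"
  ultimately have ab: "cmatrix (matrix_inv G) *v b = r *s a" "cmatrix (G ** A) *v a = r *s b"
    by (simp_all add: cmatrix_Xmat_eigenvector_iff)
  have "a \<noteq> 0"
  proof
    assume "a = 0"
    have "b = cmatrix G *v (cmatrix (matrix_inv G) *v b)"
      by (simp add: matrix_vector_mul_assoc cmatrix_matrix_inv[OF assms(1)])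
    with \<open>a = 0\<close> ab(1) have "b = 0"
      by simp
    with \<open>a = 0\<close> have "w = 0"
      unfolding vec_eq_iff split_sum_all[of "\<lambda>i. w $ i = 0 $ i"] by (simp add: a_def b_def vec_eq_iff)
    with \<open>w \<noteq> 0\<close> show False ..
  qed
  moreover have "cmatrix A *v a = r^2 *s a"
  proof -
    have "cmatrix A *v a = cmatrix (matrix_inv G) *v (cmatrix (G ** A) *v a)"
      by (simp add: cmatrix_mult matrix_vector_mul_assoc matrix_mul_assoc cmatrix_matrix_inv[OF assms(1)])
    then show ?thesis
      by (simp add: ab vector_scalar_commute vector_smult_assoc power2_eq_square)
  qed
  ultimately show ?thesis
    unfolding cspec_def by blast
qed

lemma cspec_XmatI:
  fixes G A :: "real^'n^'n"
  assumes "invertible G" and "r^2 \<in> cspec A"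
  shows "r \<in> cspec (Xmat G A)"
proof -
  from assms(2) obtain a where "a \<noteq> 0" and a: "cmatrix A *v a = r^2 *s a"
    unfolding cspec_def by blast
  define w :: "complex^('n+'n)"
    where "w = (\<chi> i. case i of Inl k \<Rightarrow> a $ k | Inr k \<Rightarrow> (r *s (cmatrix G *v a)) $ k)"
  have "(\<chi> k. w $ Inl k) = a" and "(\<chi> k. w $ Inr k) = r *s (cmatrix G *v a)"
    by (simp_all add: w_def vec_eq_iff)
  moreover have "cmatrix (matrix_inv G) *v (r *s (cmatrix G *v a)) = r *s a"
    by (simp add: vector_scalar_commute matrix_vector_mul_assoc cmatrix_matrix_inv[OF assms(1)])
  moreover have "cmatrix (G ** A) *v a = r *s (r *s (cmatrix G *v a))"
    by (simp add: cmatrix_mult flip: matrix_vector_mul_assoc)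
      (simp add: a vector_scalar_commute vector_smult_assoc power2_eq_square)
  ultimately have "cmatrix (Xmat G A) *v w = r *s w"
    by (simp add: cmatrix_Xmat_eigenvector_iff)
  moreover have "w \<noteq> 0"
    using \<open>a \<noteq> 0\<close> \<open>(\<chi> k. w $ Inl k) = a\<close> by (metis vec_lambda_unique zero_index)
  ultimately show ?thesis
    unfolding cspec_def by blast
qed

lemma cspec_Xmat:
  fixes G A :: "real^'n^'n"
  assumes "invertible G"
  shows "r \<in> cspec (Xmat G A) \<longleftrightarrow> r^2 \<in> cspec A"
  using cspec_XmatD cspec_XmatI assms by blast

lemma mult_in_cspec_scaleR: "r \<in> cspec M \<Longrightarrow> complex_of_real t * r \<in> cspec (t *\<^sub>R M)"
  unfolding cspec_def by (auto simp: cmatrix_scaleR_mult vector_smult_assoc)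

lemma cspec_scaleR:
  assumes "t \<noteq> 0"
  shows "cspec (t *\<^sub>R M) = (\<lambda>r. complex_of_real t * r) ` cspec M"
proof
  show "(\<lambda>r. complex_of_real t * r) ` cspec M \<subseteq> cspec (t *\<^sub>R M)"
    using mult_in_cspec_scaleR by blast
  show "cspec (t *\<^sub>R M) \<subseteq> (\<lambda>r. complex_of_real t * r) ` cspec M"
  proof
    fix z assume "z \<in> cspec (t *\<^sub>R M)"
    then have "complex_of_real (1 / t) * z \<in> cspec M"
      using mult_in_cspec_scaleR[of z "t *\<^sub>R M" "1 / t"] assms by simp
    then show "z \<in> (\<lambda>r. complex_of_real t * r) ` cspec M"
      using assms by (intro image_eqI[where x = "complex_of_real (1 / t) * z"]) simp_all
  qed
qed

lemma not_transversal_Phi_iff: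
  assumes "invertible G" and "t \<noteq> 0"
  shows "\<not> transversal (graph (Phi G A t)) diagonal \<longleftrightarrow>
    (\<exists>r. r^2 \<in> cspec A \<and> exp (complex_of_real t * r) = 1)"
  unfolding transversal_graph_diagonal_iff Phi_def cspec_mat_exp cspec_scaleR[OF assms(2)]
  by (auto simp: image_image image_iff cspec_Xmat[OF assms(1)] eq_commute[of 1])

lemma not_transversal_Phi_if_singular:
  assumes "invertible G" and "0 \<in> cspec A"
  shows "\<not> transversal (graph (Phi G A t)) diagonal"
proof -
  have "0 \<in> cspec (Xmat G A)"
    using cspec_Xmat[OF assms(1), of 0] assms(2) by simp
  then have "exp (complex_of_real t * 0) \<in> cspec (Phi G A t)"
    unfolding Phi_def cspec_mat_exp by (intro imageI mult_in_cspec_scaleR)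
  then show ?thesis
    by (simp add: transversal_graph_diagonal_iff)
qed

section \<open>The resonant instants\<close>

lemma exp_mult_eq_1_iff:
  assumes "t \<noteq> 0"
  shows "exp (complex_of_real t * r) = 1 \<longleftrightarrow> (\<exists>n::int. r = \<i> * complex_of_real (2 * n * pi / t))"
proof -
  have "exp (complex_of_real t * r) = 1 \<longleftrightarrow> t * Re r = 0 \<and> (\<exists>n::int. t * Im r = of_int (2 * n) * pi)"
    by (simp add: exp_eq_1)
  also have "\<dots> \<longleftrightarrow> Re r = 0 \<and> (\<exists>n::int. Im r = 2 * n * pi / t)"
    using assms by (simp add: eq_divide_eq mult.commute)
  also have "\<dots> \<longleftrightarrow> (\<exists>n::int. r = \<i> * complex_of_real (2 * n * pi / t))"
    by (auto simp: complex_eq_iff)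
  finally show ?thesis .
qed

lemma square_root_exp_eq_1_iff:
  fixes S :: "complex set"
  assumes "t > 0" and "0 \<notin> S"
  shows "(\<exists>r. r^2 \<in> S \<and> exp (complex_of_real t * r) = 1) \<longleftrightarrow>
    (\<exists>k::nat. k \<noteq> 0 \<and> complex_of_real (- 4 * (real k)^2 * pi^2 / t^2) \<in> S)"
proof -
  have "t \<noteq> 0"
    using assms(1) by simp
  have square: "(\<i> * complex_of_real (2 * of_int n * pi / t))^2 =
      complex_of_real (- 4 * (real (nat \<bar>n\<bar>))^2 * pi^2 / t^2)" for n :: int
  proof -
    have "(real (nat \<bar>n\<bar>))^2 = (real_of_int n)^2"
      by simp
    then show ?thesis
      by (simp add: power_mult_distrib power_divide)
  qed
  show ?thesis
  proof
    assume "\<exists>r. r^2 \<in> S \<and> exp (complex_of_real t * r) = 1"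
    then obtain r where "r^2 \<in> S" and "exp (complex_of_real t * r) = 1"
      by blast
    moreover from this(2) obtain n :: int where "r = \<i> * complex_of_real (2 * of_int n * pi / t)"
      unfolding exp_mult_eq_1_iff[OF \<open>t \<noteq> 0\<close>] ..
    ultimately have n: "(\<i> * complex_of_real (2 * of_int n * pi / t))^2 \<in> S"
      by simp
    with assms(2) have "n \<noteq> 0"
      by auto
    with n show "\<exists>k::nat. k \<noteq> 0 \<and> complex_of_real (- 4 * (real k)^2 * pi^2 / t^2) \<in> S"
      unfolding square by (intro exI[of _ "nat \<bar>n\<bar>"]) simp
  next
    assume "\<exists>k::nat. k \<noteq> 0 \<and> complex_of_real (- 4 * (real k)^2 * pi^2 / t^2) \<in> S"
    then obtain k :: nat where "complex_of_real (- 4 * (real k)^2 * pi^2 / t^2) \<in> S"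
      by blast
    then have "(\<i> * complex_of_real (2 * of_int (int k) * pi / t))^2 \<in> S"
      unfolding square by simp
    moreover have "exp (complex_of_real t * (\<i> * complex_of_real (2 * of_int (int k) * pi / t))) = 1"
      unfolding exp_mult_eq_1_iff[OF \<open>t \<noteq> 0\<close>] by blast
    ultimately show "\<exists>r. r^2 \<in> S \<and> exp (complex_of_real t * r) = 1"
      by blast
  qed
qed

lemma finite_resonant_times:
  fixes S :: "complex set"
  assumes "finite S"
  shows "finite {t \<in> {0<..T}. \<exists>k::nat. k \<noteq> 0 \<and>
    complex_of_real (- 4 * (real k)^2 * pi^2 / t^2) \<in> S}"
proof (rule finite_subset)
  let ?time = "\<lambda>(\<mu>, k). 2 * real k * pi / sqrt (cmod \<mu>)"
  show "finite (?time ` (SIGMA \<mu>:S. {..nat \<lceil>cmod \<mu> * T^2\<rceil>}))"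
    using assms by auto
  show "{t \<in> {0<..T}. \<exists>k::nat. k \<noteq> 0 \<and> complex_of_real (- 4 * (real k)^2 * pi^2 / t^2) \<in> S}
      \<subseteq> ?time ` (SIGMA \<mu>:S. {..nat \<lceil>cmod \<mu> * T^2\<rceil>})"
  proof
    fix t assume "t \<in> {t \<in> {0<..T}. \<exists>k::nat. k \<noteq> 0 \<and>
        complex_of_real (- 4 * (real k)^2 * pi^2 / t^2) \<in> S}"
    then obtain k :: nat where "0 < t" and "t \<le> T" and "k \<noteq> 0"
      and "complex_of_real (- 4 * (real k)^2 * pi^2 / t^2) \<in> S"
      by auto
    moreover define \<mu> where "\<mu> = complex_of_real (- 4 * (real k)^2 * pi^2 / t^2)"
    ultimately have "\<mu> \<in> S" by simp
    have norm: "cmod \<mu> = (2 * real k * pi / t)^2"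
      unfolding \<mu>_def norm_of_real by (simp add: power_divide power_mult_distrib)
    with \<open>0 < t\<close> have "sqrt (cmod \<mu>) = 2 * real k * pi / t"
      by simp
    with \<open>k \<noteq> 0\<close> have time: "t = ?time (\<mu>, k)"
      by simp
    have "real k \<le> (real k)^2"
      using \<open>k \<noteq> 0\<close> by (simp add: power2_eq_square)
    also have "\<dots> \<le> (2 * pi)^2 * (real k)^2"
      using mult_right_mono[OF one_le_power[of "2 * pi" 2], of "(real k)^2"] pi_gt3 by simp
    also have "\<dots> = cmod \<mu> * t^2"
      using norm \<open>0 < t\<close> by (simp add: power_divide power_mult_distrib)
    also have "\<dots> \<le> cmod \<mu> * T^2"
      using \<open>0 < t\<close> \<open>t \<le> T\<close> by (intro mult_left_mono power_mono) auto
    finally have "k \<le> nat \<lceil>cmod \<mu> * T^2\<rceil>"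
      by linarith
    with \<open>\<mu> \<in> S\<close> time show "t \<in> ?time ` (SIGMA \<mu>:S. {..nat \<lceil>cmod \<mu> * T^2\<rceil>})"
      by force
  qed
qed

theorem lemma5p2:
  fixes G A :: "real^'n^'n" and T :: real
  assumes "transpose G = G" and "invertible G"
    and "g_symmetric G A"
    and "T > 0"
  shows "({x. A *v x = 0} = {0} \<longrightarrow>
            finite {t \<in> {0<..T}. \<not> transversal (graph (Phi G A t)) diagonal} \<and>
            {t \<in> {0<..T}. \<not> transversal (graph (Phi G A t)) diagonal} =
            {t \<in> {0<..T}. \<exists>k::nat. k \<noteq> 0 \<and>
               complex_of_real (- 4 * (real k)^2 * pi^2 / t^2) \<in> cspec A})
       \<and> (0 \<in> cspec A \<longrightarrow>
            {t \<in> {0..T}. \<not> transversal (graph (Phi G A t)) diagonal} = {0..T})"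
proof (intro conjI impI)
  assume "{x. A *v x = 0} = {0}"
  then have "0 \<notin> cspec A"
    using of_real_in_cspec_iff[of 0 A] by auto
  have "\<not> transversal (graph (Phi G A t)) diagonal \<longleftrightarrow>
      (\<exists>k::nat. k \<noteq> 0 \<and> complex_of_real (- 4 * (real k)^2 * pi^2 / t^2) \<in> cspec A)"
    if "t > 0" for t
    using not_transversal_Phi_iff[OF assms(2), of t] square_root_exp_eq_1_iff[OF that \<open>0 \<notin> cspec A\<close>]
      that by simp
  then show eq: "{t \<in> {0<..T}. \<not> transversal (graph (Phi G A t)) diagonal} =
      {t \<in> {0<..T}. \<exists>k::nat. k \<noteq> 0 \<and> complex_of_real (- 4 * (real k)^2 * pi^2 / t^2) \<in> cspec A}"
    by auto
  show "finite {t \<in> {0<..T}. \<not> transversal (graph (Phi G A t)) diagonal}"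
    unfolding eq by (rule finite_resonant_times[OF finite_cspec])
next
  assume "0 \<in> cspec A"
  then show "{t \<in> {0..T}. \<not> transversal (graph (Phi G A t)) diagonal} = {0..T}"
    using not_transversal_Phi_if_singular[OF assms(2)] by auto
qed

end
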